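(* Suppose Assumptions (A1), (A2), (A3) and (LIN) hold, and let $x\in\mathcal{X}$ be such that $y^*(x)$ is a single point. Then for every $i\in\{1,\dots,k\}$, $\displaystyle\lim_{t\to0^+}\frac{t}{-h_i(x,y_t^*(x))}=\lambda_i(x)$.
   Context: Let $f,g,h_1,\dots,h_k:\mathbb{R}^n\times\mathbb{R}^m\to\mathbb{R}$ and $\mathcal{X}\subseteq\mathbb{R}^n$. For $x\in\mathcal{X}$ let $\mathcal{Y}(x)=\{y: h_i(x,y)\le 0,\ i=1,\dots,k\}$ and $y^*(x)=\arg\min_{y\in\mathcal{Y}(x)} g(x,y)$. For $t>0$ let $\widetilde g_t(x,y)=g(x,y)-t\sum_{i=1}^k\log(-h_i(x,y))$ (defined when all $h_i(x,y)<0$) and $y_t^*(x)=\arg\min_y\widetilde g_t(x,y)$. $\lambda_i(x)\ge0$ denotes the optimal KKT multiplier of the $i$-th constraint of the lower-level problem at $y^*(x)$. Assumptions: (A1) $f$ once and $g,h_i$ twice continuously differentiable; (A2) $\mathcal{X}$ convex and compact and for every $x\in\mathcal{X}$ there is $y$ with $h_i(x,y)<0$ for all $i$; (A3) (LICQ) for every $x\in\mathcal{X}$ and $y\in y^*(x)$, $\{\nabla_y h_i(x,y): h_i(x,y)=0\}$ is linearly independent; (LIN) for every $x\in\mathcal{X}$, $g(x,\cdot)$ and all $h_i(x,\cdot)$ are linear (affine) in $y$ and $\mathcal{Y}(x)$ is compact. *)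

theory Defs
  imports "HOL-Analysis.Analysis"
begin

definition C1_fun :: "('a::euclidean_space \<Rightarrow> real) \<Rightarrow> bool" where
  "C1_fun F \<longleftrightarrow> (\<exists>F'. (\<forall>z. (F has_derivative blinfun_apply (F' z)) (at z))
                    \<and> continuous_on UNIV F')"

definition C2_fun :: "('a::euclidean_space \<Rightarrow> real) \<Rightarrow> bool" where
  "C2_fun F \<longleftrightarrow> (\<exists>F' F''. (\<forall>z. (F has_derivative blinfun_apply (F' z)) (at z))
                    \<and> (\<forall>z. (F' has_derivative blinfun_apply (F'' z)) (at z))
                    \<and> continuous_on UNIV F'')"

definition grad_y :: "('n \<Rightarrow> real^'m \<Rightarrow> real) \<Rightarrow> 'n \<Rightarrow> real^'m \<Rightarrow> real^'m" where
  "grad_y F x y = (\<chi> j. frechet_derivative (F x) (at y) (axis j 1))"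

definition feas :: "nat \<Rightarrow> (nat \<Rightarrow> 'n \<Rightarrow> 'y \<Rightarrow> real) \<Rightarrow> 'n \<Rightarrow> 'y set" where
  "feas k h x = {y. \<forall>i\<in>{1..k}. h i x y \<le> 0}"

definition ystar :: "nat \<Rightarrow> ('n \<Rightarrow> 'y \<Rightarrow> real) \<Rightarrow> (nat \<Rightarrow> 'n \<Rightarrow> 'y \<Rightarrow> real) \<Rightarrow> 'n \<Rightarrow> 'y set" where
  "ystar k g h x = {y \<in> feas k h x. \<forall>z\<in>feas k h x. g x y \<le> g x z}"

definition gbar :: "nat \<Rightarrow> ('n \<Rightarrow> 'y \<Rightarrow> real) \<Rightarrow> (nat \<Rightarrow> 'n \<Rightarrow> 'y \<Rightarrow> real) \<Rightarrow> real \<Rightarrow> 'n \<Rightarrow> 'y \<Rightarrow> real" where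
  "gbar k g h t x y = g x y - t * (\<Sum>i=1..k. ln (- h i x y))"

definition sfeas :: "nat \<Rightarrow> (nat \<Rightarrow> 'n \<Rightarrow> 'y \<Rightarrow> real) \<Rightarrow> 'n \<Rightarrow> 'y set" where
  "sfeas k h x = {y. \<forall>i\<in>{1..k}. h i x y < 0}"

definition is_barrier_min :: "nat \<Rightarrow> ('n \<Rightarrow> 'y \<Rightarrow> real) \<Rightarrow> (nat \<Rightarrow> 'n \<Rightarrow> 'y \<Rightarrow> real) \<Rightarrow> real \<Rightarrow> 'n \<Rightarrow> 'y \<Rightarrow> bool" where
  "is_barrier_min k g h t x y \<longleftrightarrow> y \<in> sfeas k h x \<and>
     (\<forall>z\<in>sfeas k h x. gbar k g h t x y \<le> gbar k g h t x z)"

definition is_KKT_mult :: "nat \<Rightarrow> ('n \<Rightarrow> real^'m \<Rightarrow> real) \<Rightarrow> (nat \<Rightarrow> 'n \<Rightarrow> real^'m \<Rightarrow> real) \<Rightarrow> 'n \<Rightarrow> real^'m \<Rightarrow> (nat \<Rightarrow> real) \<Rightarrow> bool" where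
  "is_KKT_mult k g h x y lam \<longleftrightarrow>
     (\<forall>i\<in>{1..k}. lam i \<ge> 0 \<and> lam i * h i x y = 0) \<and>
     grad_y g x y + (\<Sum>i=1..k. lam i *\<^sub>R grad_y (h i) x y) = 0"

definition affine_fun :: "(real^'m \<Rightarrow> real) \<Rightarrow> bool" where
  "affine_fun F \<longleftrightarrow> (\<exists>c d. \<forall>y. F y = c \<bullet> y + d)"

end

theory Submission
  imports Defs
begin

(* For affine data the barrier minimiser y_t is a stationary point:
   grad g + sum_i mu_i(t) grad h_i = 0 with mu_i(t) = t / (-h_i(x, y_t)).  So mu(t) is a
   dual feasible multiplier, and weak duality bounds the complementarity gap
   sum_i mu_i(t) (-h_i(x, ys)) at the lower-level minimiser ys by k t.  Hence mu_i(t) -> 0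
   for every inactive constraint, so sum over the active set of (mu_i(t) - lambda_i) grad h_i
   tends to 0, and LICQ turns this into mu_i(t) -> lambda_i. *)

lemma in_span_image_sum:
  fixes f :: "'i \<Rightarrow> 'a::real_vector"
  assumes "finite B" "z \<in> span (f ` B)"
  shows "\<exists>u. z = (\<Sum>i\<in>B. u i *\<^sub>R f i)"
  using assms(2)
proof (induction rule: span_induct_alt)
  case base
  show ?case by (rule exI[of _ "\<lambda>_. 0"]) simp
next
  case (step c x y)
  then obtain i0 u where i0: "i0 \<in> B" "x = f i0" and u: "y = (\<Sum>i\<in>B. u i *\<^sub>R f i)"
    by auto
  have "c *\<^sub>R x = (\<Sum>i\<in>B. (if i = i0 then c else 0) *\<^sub>R f i)"
    using i0 assms(1) by (simp add: if_distrib[of "\<lambda>r. r *\<^sub>R _"] cong: if_cong)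
  then have "c *\<^sub>R x + y = (\<Sum>i\<in>B. (u i + (if i = i0 then c else 0)) *\<^sub>R f i)"
    using u by (simp add: scaleR_add_left sum.distrib)
  then show ?case by (intro exI[where x="\<lambda>i. u i + (if i = i0 then c else 0)"])
qed

lemma independent_family_dual_vector:
  fixes v :: "'i \<Rightarrow> 'a::euclidean_space"
  assumes "finite A" and indep: "\<And>u. (\<Sum>i\<in>A. u i *\<^sub>R v i) = 0 \<Longrightarrow> \<forall>i\<in>A. u i = 0"
    and "j \<in> A"
  obtains w where "v j \<bullet> w \<noteq> 0" and "\<And>i. i \<in> A - {j} \<Longrightarrow> v i \<bullet> w = 0"
proof -
  obtain p w where p: "p \<in> span (v ` (A - {j}))"
    and w: "\<And>z. z \<in> span (v ` (A - {j})) \<Longrightarrow> orthogonal w z" and vj: "v j = p + w"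
    by (rule orthogonal_subspace_decomp_exists[of "v ` (A - {j})" "v j"]) blast
  have perp: "v i \<bullet> w = 0" if "i \<in> A - {j}" for i
    using w[OF span_base, of "v i"] that by (auto simp: orthogonal_def inner_commute)
  have "w \<noteq> 0"
  proof
    assume "w = 0"
    with p vj obtain u where u: "v j = (\<Sum>i\<in>A - {j}. u i *\<^sub>R v i)"
      using in_span_image_sum[of "A - {j}"] \<open>finite A\<close> by auto
    define u' where "u' i = (if i = j then -1 else u i)" for i
    have "(\<Sum>i\<in>A. u' i *\<^sub>R v i) = - v j + (\<Sum>i\<in>A - {j}. u i *\<^sub>R v i)"
      using \<open>finite A\<close> \<open>j \<in> A\<close> by (simp add: sum.remove u'_def)
    then have "u' j = 0" using indep u \<open>j \<in> A\<close> by auto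
    then show False by (simp add: u'_def)
  qed
  moreover have "v j \<bullet> w = w \<bullet> w"
    using w[OF p] vj by (simp add: inner_add_left inner_add_right orthogonal_def inner_commute)
  ultimately show thesis using that perp by (metis inner_eq_zero_iff)
qed

lemma tendsto_coefficients_of_independent:
  fixes v :: "'i \<Rightarrow> 'a::euclidean_space"
  assumes "finite A" and indep: "\<And>u. (\<Sum>i\<in>A. u i *\<^sub>R v i) = 0 \<Longrightarrow> \<forall>i\<in>A. u i = 0"
    and lim: "((\<lambda>t. \<Sum>i\<in>A. c t i *\<^sub>R v i) \<longlongrightarrow> 0) F" and "j \<in> A"
  shows "((\<lambda>t. c t j) \<longlongrightarrow> 0) F"
proof -
  obtain w where vjw: "v j \<bullet> w \<noteq> 0" and perp: "\<And>i. i \<in> A - {j} \<Longrightarrow> v i \<bullet> w = 0"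
    using independent_family_dual_vector[OF assms(1,2,4)] by blast
  have "(\<Sum>i\<in>A. c t i *\<^sub>R v i) \<bullet> w / (v j \<bullet> w) = c t j" for t
    using \<open>finite A\<close> \<open>j \<in> A\<close> vjw perp by (simp add: sum.remove inner_add_left inner_sum_left)
  moreover have "((\<lambda>t. (\<Sum>i\<in>A. c t i *\<^sub>R v i) \<bullet> w / (v j \<bullet> w)) \<longlongrightarrow> 0 \<bullet> w / (v j \<bullet> w)) F"
    using vjw by (intro tendsto_intros lim)
  ultimately show ?thesis by simp
qed

lemma tendsto_zero_of_weighted_sum_le:
  fixes \<mu> :: "'b \<Rightarrow> 'i \<Rightarrow> real"
  assumes "finite S" and s_nonneg: "\<And>i. i \<in> S \<Longrightarrow> s i \<ge> 0"
    and \<mu>_nonneg: "eventually (\<lambda>t. \<forall>i\<in>S. \<mu> t i \<ge> 0) F"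
    and bound: "eventually (\<lambda>t. (\<Sum>i\<in>S. \<mu> t i * s i) \<le> \<beta> t) F" and "(\<beta> \<longlongrightarrow> 0) F"
    and "j \<in> S" "s j > 0"
  shows "((\<lambda>t. \<mu> t j) \<longlongrightarrow> 0) F"
proof (rule tendsto_sandwich[where f="\<lambda>_. 0" and h="\<lambda>t. \<beta> t / s j"])
  show "eventually (\<lambda>t. 0 \<le> \<mu> t j) F"
    using \<mu>_nonneg by eventually_elim (use \<open>j \<in> S\<close> in blast)
  show "eventually (\<lambda>t. \<mu> t j \<le> \<beta> t / s j) F"
    using \<mu>_nonneg bound
  proof eventually_elim
    case (elim t)
    have "\<mu> t j * s j \<le> (\<Sum>i\<in>S. \<mu> t i * s i)"
      using elim(1) s_nonneg \<open>finite S\<close> \<open>j \<in> S\<close> by (intro member_le_sum) auto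
    with elim(2) \<open>s j > 0\<close> show ?case by (simp add: field_simps)
  qed
  show "((\<lambda>t. \<beta> t / s j) \<longlongrightarrow> 0) F"
    using tendsto_divide[OF \<open>(\<beta> \<longlongrightarrow> 0) F\<close> tendsto_const[of "s j"]] \<open>s j > 0\<close> by simp
qed simp

lemma multipliers_tendsto:
  fixes a :: "'i \<Rightarrow> 'a::euclidean_space" and \<mu> :: "'b \<Rightarrow> 'i \<Rightarrow> real"
    and S :: "'i set" and s :: "'i \<Rightarrow> real"
  defines "A \<equiv> {i\<in>S. s i = 0}"
  assumes "finite S"
    and indep: "\<And>u. (\<Sum>i\<in>A. u i *\<^sub>R a i) = 0 \<Longrightarrow> \<forall>i\<in>A. u i = 0"
    and s_nonneg: "\<And>i. i \<in> S \<Longrightarrow> s i \<ge> 0"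
    and slack: "\<And>i. i \<in> S \<Longrightarrow> lam i * s i = 0"
    and lam: "c + (\<Sum>i\<in>S. lam i *\<^sub>R a i) = 0"
    and \<mu>: "eventually (\<lambda>t. c + (\<Sum>i\<in>S. \<mu> t i *\<^sub>R a i) = 0) F"
    and \<mu>_nonneg: "eventually (\<lambda>t. \<forall>i\<in>S. \<mu> t i \<ge> 0) F"
    and gap: "eventually (\<lambda>t. (\<Sum>i\<in>S. \<mu> t i * s i) \<le> \<beta> t) F" and "(\<beta> \<longlongrightarrow> 0) F"
    and "j \<in> S"
  shows "((\<lambda>t. \<mu> t j) \<longlongrightarrow> lam j) F"
proof -
  have inactive: "((\<lambda>t. \<mu> t i) \<longlongrightarrow> 0) F" if "i \<in> S - A" for i
    using that s_nonneg[of i]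
    by (intro tendsto_zero_of_weighted_sum_le[OF \<open>finite S\<close> s_nonneg \<mu>_nonneg gap])
       (auto simp: A_def \<open>(\<beta> \<longlongrightarrow> 0) F\<close>)
  have lam_inactive: "lam i = 0" if "i \<in> S - A" for i
    using slack[of i] that by (auto simp: A_def)
  have split: "(\<Sum>i\<in>S. u i *\<^sub>R a i) = (\<Sum>i\<in>A. u i *\<^sub>R a i) + (\<Sum>i\<in>S - A. u i *\<^sub>R a i)"
    for u :: "'i \<Rightarrow> real"
    using \<open>finite S\<close> by (simp add: A_def sum.subset_diff[of "{i\<in>S. s i = 0}" S])
  have "eventually (\<lambda>t. (\<Sum>i\<in>A. (\<mu> t i - lam i) *\<^sub>R a i) = - (\<Sum>i\<in>S - A. \<mu> t i *\<^sub>R a i)) F"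
    using \<mu>
  proof eventually_elim
    case (elim t)
    have "(\<Sum>i\<in>S - A. lam i *\<^sub>R a i) = 0" using lam_inactive by simp
    moreover have "(\<Sum>i\<in>S. \<mu> t i *\<^sub>R a i) = (\<Sum>i\<in>S. lam i *\<^sub>R a i)"
      using elim lam by (metis add_left_cancel)
    ultimately show ?case
      by (simp add: split scaleR_diff_left sum_subtractf algebra_simps)
  qed
  moreover have "((\<lambda>t. - (\<Sum>i\<in>S - A. \<mu> t i *\<^sub>R a i)) \<longlongrightarrow> - (\<Sum>i\<in>S - A. 0 *\<^sub>R a i)) F"
    by (intro tendsto_intros inactive)
  ultimately have active: "((\<lambda>t. \<Sum>i\<in>A. (\<mu> t i - lam i) *\<^sub>R a i) \<longlongrightarrow> 0) F"
    by (simp add: tendsto_cong)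
  show ?thesis
  proof (cases "j \<in> A")
    case True
    have "((\<lambda>t. \<mu> t j - lam j) \<longlongrightarrow> 0) F"
      using \<open>finite S\<close> True
      by (intro tendsto_coefficients_of_independent[OF _ indep active]) (auto simp: A_def)
    then show ?thesis by (simp add: LIM_zero_iff)
  next
    case False
    then show ?thesis using inactive lam_inactive \<open>j \<in> S\<close> by simp
  qed
qed

lemma grad_y_linear:
  assumes "\<And>y. F x y = c \<bullet> y + d"
  shows "grad_y F x y = c"
proof -
  have "F x = (\<lambda>y. c \<bullet> y + d)" using assms by blast
  moreover have "((\<lambda>y. c \<bullet> y + d) has_derivative (\<lambda>v. c \<bullet> v)) (at y)"
    by (auto intro!: derivative_eq_intros)
  ultimately have "frechet_derivative (F x) (at y) = (\<lambda>v. c \<bullet> v)"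
    by (simp add: frechet_derivative_at[symmetric])
  then show ?thesis unfolding grad_y_def by (simp add: vec_eq_iff inner_axis)
qed

lemma affine_fun_grad_y_expansion:
  assumes "affine_fun (F x)"
  shows "F x z = F x y + grad_y F x w \<bullet> (z - y)"
proof -
  obtain c d where "\<And>y. F x y = c \<bullet> y + d"
    using assms unfolding affine_fun_def by blast
  moreover from this have "grad_y F x w = c" by (rule grad_y_linear)
  ultimately show ?thesis by (simp add: inner_diff_right)
qed

lemma open_sfeas:
  assumes "\<forall>i\<in>{1..k}. affine_fun (h i x)"
  shows "open (sfeas k h x)"
proof -
  have "open {z. h i x z < 0}" if i: "i \<in> {1..k}" for i
  proof -
    obtain c d where "\<And>z. h i x z = c \<bullet> z + d"
      using assms i unfolding affine_fun_def by blast
    then have "{z. h i x z < 0} = {z. c \<bullet> z < - d}" by auto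
    then show ?thesis by (simp add: open_halfspace_lt)
  qed
  moreover have "sfeas k h x = (\<Inter>i\<in>{1..k}. {z. h i x z < 0})"
    by (auto simp: sfeas_def)
  ultimately show ?thesis by (auto intro!: open_INT)
qed

lemma barrier_min_stationary:
  fixes g :: "'n \<Rightarrow> real^'m \<Rightarrow> real" and h :: "nat \<Rightarrow> 'n \<Rightarrow> real^'m \<Rightarrow> real"
  assumes g: "affine_fun (g x)" and h: "\<forall>i\<in>{1..k}. affine_fun (h i x)"
    and min: "is_barrier_min k g h t x y"
  shows "grad_y g x w + (\<Sum>i=1..k. (t / - h i x y) *\<^sub>R grad_y (h i) x w) = 0"
proof -
  define c where "c = grad_y g x w"
  define a where "a i = grad_y (h i) x w" for i
  define d where "d = g x y"
  define b where "b i = h i x y" for i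
  have g_exp: "g x z = d + c \<bullet> (z - y)" for z
    unfolding c_def d_def by (rule affine_fun_grad_y_expansion[of g x, OF g])
  have h_exp: "h i x z = b i + a i \<bullet> (z - y)" if "i \<in> {1..k}" for i z
    unfolding a_def b_def using h that by (intro affine_fun_grad_y_expansion[of "h i" x]) auto
  have y: "y \<in> sfeas k h x" and y_min: "\<forall>z\<in>sfeas k h x. gbar k g h t x y \<le> gbar k g h t x z"
    using min unfolding is_barrier_min_def by auto
  have b_neg: "b i < 0" if "i \<in> {1..k}" for i
    using y that unfolding sfeas_def b_def by auto
  have "(\<Sum>i=1..k. ln (- h i x z)) = (\<Sum>i=1..k. ln (- (b i + a i \<bullet> (z - y))))" for z
    by (rule sum.cong) (simp_all add: h_exp)
  then have "gbar k g h t x = (\<lambda>z. d + c \<bullet> (z - y) - t * (\<Sum>i=1..k. ln (- (b i + a i \<bullet> (z - y)))))"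
    by (simp add: gbar_def fun_eq_iff g_exp)
  moreover have "((\<lambda>z. d + c \<bullet> (z - y) - t * (\<Sum>i=1..k. ln (- (b i + a i \<bullet> (z - y)))))
      has_derivative (\<lambda>v. c \<bullet> v - t * (\<Sum>i=1..k. - (a i \<bullet> v) * inverse (- b i)))) (at y)"
    by (intro derivative_eq_intros has_derivative_sum) (auto simp: b_neg)
  moreover have "(\<lambda>v. c \<bullet> v - t * (\<Sum>i=1..k. - (a i \<bullet> v) * inverse (- b i)))
      = (\<lambda>v. (c + (\<Sum>i=1..k. (t / - b i) *\<^sub>R a i)) \<bullet> v)"
    by (simp add: fun_eq_iff inner_add_left inner_sum_left sum_distrib_left divide_inverse mult_ac
        flip: sum_negf)
  ultimately have "(gbar k g h t x has_derivative (\<lambda>v. (c + (\<Sum>i=1..k. (t / - b i) *\<^sub>R a i)) \<bullet> v)) (at y)"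
    by (simp only:)
  then have "(\<lambda>v. (c + (\<Sum>i=1..k. (t / - b i) *\<^sub>R a i)) \<bullet> v) = (\<lambda>v. 0)"
    by (rule differential_zero_maxmin[OF y open_sfeas[of k h x, OF h]]) (use y_min in blast)
  then have "(c + (\<Sum>i=1..k. (t / - b i) *\<^sub>R a i)) = 0"
    by (metis inner_eq_zero_iff)
  then show ?thesis unfolding a_def b_def c_def .
qed

lemma barrier_duality_gap:
  fixes g :: "'n \<Rightarrow> real^'m \<Rightarrow> real" and h :: "nat \<Rightarrow> 'n \<Rightarrow> real^'m \<Rightarrow> real"
  assumes g: "affine_fun (g x)" and h: "\<forall>i\<in>{1..k}. affine_fun (h i x)"
    and min: "is_barrier_min k g h t x y" and ys: "ys \<in> ystar k g h x"
  shows "(\<Sum>i=1..k. t / - h i x y * - h i x ys) \<le> real k * t"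
proof -
  define \<mu> where "\<mu> i = t / - h i x y" for i
  have y: "\<forall>i\<in>{1..k}. h i x y < 0"
    using min unfolding is_barrier_min_def sfeas_def by auto
  have slack: "\<mu> i * - h i x ys = t - \<mu> i * (grad_y (h i) x y \<bullet> (ys - y))" if "i \<in> {1..k}" for i
  proof -
    have "h i x y < 0" using y that by auto
    with affine_fun_grad_y_expansion[of "h i" x ys y y] h that show ?thesis
      by (simp add: \<mu>_def field_simps)
  qed
  have "(\<Sum>i=1..k. \<mu> i * - h i x ys) = (\<Sum>i=1..k. t - \<mu> i * (grad_y (h i) x y \<bullet> (ys - y)))"
    by (rule sum.cong[OF refl]) (rule slack)
  also have "\<dots> = real k * t - (\<Sum>i=1..k. \<mu> i *\<^sub>R grad_y (h i) x y) \<bullet> (ys - y)"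
    by (simp add: sum_subtractf inner_sum_left)
  also have "\<dots> = real k * t + grad_y g x y \<bullet> (ys - y)"
    using barrier_min_stationary[OF g h min, of y, folded \<mu>_def] by (simp add: add_eq_0_iff2)
  also have "\<dots> = real k * t + (g x ys - g x y)"
    using affine_fun_grad_y_expansion[of g x ys y y, OF g] by simp
  also have "\<dots> \<le> real k * t"
    using ys y unfolding ystar_def feas_def by (fastforce simp: less_imp_le)
  finally show ?thesis unfolding \<mu>_def .
qed

theorem lemma13:
  fixes f g :: "real^'n \<Rightarrow> real^'m \<Rightarrow> real"
    and h :: "nat \<Rightarrow> real^'n \<Rightarrow> real^'m \<Rightarrow> real"
    and k :: nat and X :: "(real^'n) set" and x :: "real^'n"
    and ys :: "real^'m" and yt :: "real \<Rightarrow> real^'m" and lam :: "nat \<Rightarrow> real"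
  assumes A1: "C1_fun (\<lambda>z. f (fst z) (snd z))" "C2_fun (\<lambda>z. g (fst z) (snd z))"
              "\<forall>i\<in>{1..k}. C2_fun (\<lambda>z. h i (fst z) (snd z))"
    and A2: "convex X" "compact X" "\<forall>x'\<in>X. \<exists>y. \<forall>i\<in>{1..k}. h i x' y < 0"
    and A3: "\<forall>x'\<in>X. \<forall>y\<in>ystar k g h x'.
               (\<forall>c::nat \<Rightarrow> real.
                  (\<Sum>i\<in>{i\<in>{1..k}. h i x' y = 0}. c i *\<^sub>R grad_y (h i) x' y) = 0
                  \<longrightarrow> (\<forall>i\<in>{i\<in>{1..k}. h i x' y = 0}. c i = 0))"
    and LIN: "\<forall>x'\<in>X. affine_fun (g x') \<and> (\<forall>i\<in>{1..k}. affine_fun (h i x'))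
                     \<and> compact (feas k h x')"
    and hx: "x \<in> X"
    and single: "ystar k g h x = {ys}"
    and ytmin: "\<forall>t>0. is_barrier_min k g h t x (yt t)"
    and KKT: "is_KKT_mult k g h x ys lam"
  shows "\<forall>i\<in>{1..k}. ((\<lambda>t. t / (- h i x (yt t))) \<longlongrightarrow> lam i) (at_right 0)"
proof
  fix j assume "j \<in> {1..k}"
  have g: "affine_fun (g x)" and h: "\<forall>i\<in>{1..k}. affine_fun (h i x)"
    using LIN hx by auto
  have ys: "ys \<in> ystar k g h x" using single by simp
  have yt: "\<forall>i\<in>{1..k}. h i x (yt t) < 0" if "t > 0" for t
    using ytmin that unfolding is_barrier_min_def sfeas_def by auto
  have pos: "\<forall>\<^sub>F t in at_right 0. (0::real) < t"
    by (rule eventually_at_right_less)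
  show "((\<lambda>t. t / - h j x (yt t)) \<longlongrightarrow> lam j) (at_right 0)"
  proof (rule multipliers_tendsto[where a="\<lambda>i. grad_y (h i) x ys" and s="\<lambda>i. - h i x ys"
        and c="grad_y g x ys" and \<beta>="\<lambda>t. real k * t"])
    show "(\<Sum>i\<in>{i\<in>{1..k}. - h i x ys = 0}. u i *\<^sub>R grad_y (h i) x ys) = 0 \<Longrightarrow>
        \<forall>i\<in>{i\<in>{1..k}. - h i x ys = 0}. u i = 0" for u
      using A3 hx ys by simp
    show "- h i x ys \<ge> 0" if "i \<in> {1..k}" for i
      using ys that unfolding ystar_def feas_def by auto
    show "lam i * - h i x ys = 0" if "i \<in> {1..k}" for i
      using KKT that unfolding is_KKT_mult_def by auto
    show "grad_y g x ys + (\<Sum>i=1..k. lam i *\<^sub>R grad_y (h i) x ys) = 0"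
      using KKT unfolding is_KKT_mult_def by auto
    show "\<forall>\<^sub>F t in at_right 0. grad_y g x ys + (\<Sum>i=1..k. (t / - h i x (yt t)) *\<^sub>R grad_y (h i) x ys) = 0"
      using pos by (rule eventually_mono) (rule barrier_min_stationary[OF g h ytmin[rule_format]])
    show "\<forall>\<^sub>F t in at_right 0. \<forall>i\<in>{1..k}. t / - h i x (yt t) \<ge> 0"
      using pos by (rule eventually_mono) (simp add: yt divide_nonneg_neg less_imp_le)
    show "\<forall>\<^sub>F t in at_right 0. (\<Sum>i=1..k. t / - h i x (yt t) * - h i x ys) \<le> real k * t"
      using pos by (rule eventually_mono) (rule barrier_duality_gap[OF g h ytmin[rule_format] ys])
    show "((\<lambda>t. real k * t) \<longlongrightarrow> 0) (at_right 0)"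
      by (auto intro!: tendsto_eq_intros)
  qed (use \<open>j \<in> {1..k}\<close> in auto)
qed

end
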